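(* Every Sasakian Lie algebroid is $K$-contact; that is, if $E$ is a contact Riemannian Lie algebroid whose associated almost contact Riemannian structure $(F_E,\xi,\eta,g_E)$ is normal, then $\xi$ is a Killing section of $g_E$.
   Context: A Lie algebroid $(E,\rho_E,[\cdot,\cdot]_E)$ over $M$ is a vector bundle with anchor $\rho_E:E\to TM$ and Lie bracket on $\Gamma(E)$ with $[s_1,fs_2]_E=f[s_1,s_2]_E+\rho_E(s_1)(f)s_2$. For a 1-form $\eta$, $(d_E\eta)(s_1,s_2)=\frac12\{\rho_E(s_1)(\eta(s_2))-\rho_E(s_2)(\eta(s_1))-\eta([s_1,s_2]_E)\}$. For $E$ of rank $2m+1$, an almost contact Riemannian structure $(F_E,\xi,\eta,g_E)$: endomorphism $F_E$, $\xi\in\Gamma(E)$, $\eta\in\Gamma(E^* )$, bundle metric $g_E$ with $F_E^2=-I_E+\eta\otimes\xi$, $\eta(\xi)=1$, $g_E(F_Es_1,F_Es_2)=g_E(s_1,s_2)-\eta(s_1)\eta(s_2)$; fundamental form $\Omega_E(s_1,s_2)=g_E(s_1,F_Es_2)$. $E$ is contact Riemannian if also $\eta\wedge(d_E\eta)^m$ vanishes nowhere and $d_E\eta=\Omega_E$. The structure is normal if $N_{F_E}+2\,d_E\eta\otimes\xi=0$, where $N_{F_E}(s_1,s_2)=[F_Es_1,F_Es_2]_E-F_E[F_Es_1,s_2]_E-F_E[s_1,F_Es_2]_E+F_E^2[s_1,s_2]_E$. A Sasakian Lie algebroid is a contact Riemannian Lie algebroid whose structure is normal. $\xi$ is Killing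 if $\rho_E(\xi)(g_E(s_1,s_2))-g_E([\xi,s_1]_E,s_2)-g_E(s_1,[\xi,s_2]_E)=0$ for all $s_1,s_2$; $K$-contact means contact Riemannian with $\xi$ Killing. *)

theory Defs
  imports "HOL-Analysis.Analysis"
begin

text \<open>Abstract model of a Lie algebroid over a manifold M (type 'm).
  Smooth functions: a set C of real functions on M.
  Vector bundle E: fibres E x, linear subspaces of an ambient real vector space 'e,
  with a set Gam of smooth sections (functions 'm => 'e with s x in E x).
  Anchor: rho s is the vector field rho_E(s), acting as a derivation on C.\<close>

definition lin_on :: "'a::real_vector set \<Rightarrow> ('a \<Rightarrow> 'b::real_vector) \<Rightarrow> bool" where
  "lin_on V f \<longleftrightarrow> (\<forall>u\<in>V. \<forall>v\<in>V. f (u + v) = f u + f v) \<and> (\<forall>c. \<forall>u\<in>V. f (c *\<^sub>R u) = c *\<^sub>R f u)"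

definition fmul :: "('m \<Rightarrow> real) \<Rightarrow> ('m \<Rightarrow> 'e::real_vector) \<Rightarrow> ('m \<Rightarrow> 'e)" where
  "fmul f s = (\<lambda>x. f x *\<^sub>R s x)"

definition lie_algebroid ::
  "('m \<Rightarrow> real) set \<Rightarrow> ('m \<Rightarrow> 'e::real_vector set) \<Rightarrow> ('m \<Rightarrow> 'e) set
   \<Rightarrow> (('m \<Rightarrow> 'e) \<Rightarrow> ('m \<Rightarrow> real) \<Rightarrow> ('m \<Rightarrow> real))
   \<Rightarrow> (('m \<Rightarrow> 'e) \<Rightarrow> ('m \<Rightarrow> 'e) \<Rightarrow> ('m \<Rightarrow> 'e)) \<Rightarrow> bool" where
  "lie_algebroid C E Gam rho br \<longleftrightarrow>
     \<comment> \<open>smooth functions form an algebra containing the constants\<close>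
     (\<forall>c. (\<lambda>x. c) \<in> C) \<and>
     (\<forall>f\<in>C. \<forall>h\<in>C. (\<lambda>x. f x + h x) \<in> C \<and> (\<lambda>x. f x * h x) \<in> C) \<and>
     \<comment> \<open>vector bundle: fibres are subspaces; sections form a C-module and span each fibre\<close>
     (\<forall>x. subspace (E x)) \<and>
     (\<forall>s\<in>Gam. \<forall>x. s x \<in> E x) \<and>
     (\<forall>x. \<forall>v\<in>E x. \<exists>s\<in>Gam. s x = v) \<and>
     (\<lambda>x. 0) \<in> Gam \<and>
     (\<forall>s\<in>Gam. \<forall>t\<in>Gam. (\<lambda>x. s x + t x) \<in> Gam) \<and>
     (\<forall>f\<in>C. \<forall>s\<in>Gam. fmul f s \<in> Gam) \<and>
     \<comment> \<open>anchor: rho s is a vector field (derivation of C), C-linear in s\<close>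
     (\<forall>s\<in>Gam. \<forall>f\<in>C. rho s f \<in> C) \<and>
     (\<forall>s\<in>Gam. \<forall>f\<in>C. \<forall>h\<in>C. rho s (\<lambda>x. f x + h x) = (\<lambda>x. rho s f x + rho s h x)) \<and>
     (\<forall>s\<in>Gam. \<forall>f\<in>C. \<forall>c. rho s (\<lambda>x. c * f x) = (\<lambda>x. c * rho s f x)) \<and>
     (\<forall>s\<in>Gam. \<forall>f\<in>C. \<forall>h\<in>C. rho s (\<lambda>x. f x * h x) = (\<lambda>x. f x * rho s h x + h x * rho s f x)) \<and>
     (\<forall>s\<in>Gam. \<forall>t\<in>Gam. \<forall>f\<in>C. rho (\<lambda>x. s x + t x) f = (\<lambda>x. rho s f x + rho t f x)) \<and>
     (\<forall>s\<in>Gam. \<forall>h\<in>C. \<forall>f\<in>C. rho (fmul h s) f = (\<lambda>x. h x * rho s f x)) \<and>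
     \<comment> \<open>Lie bracket on sections\<close>
     (\<forall>s\<in>Gam. \<forall>t\<in>Gam. br s t \<in> Gam) \<and>
     (\<forall>s\<in>Gam. \<forall>t\<in>Gam. \<forall>u\<in>Gam. br s (\<lambda>x. t x + u x) = (\<lambda>x. br s t x + br s u x)) \<and>
     (\<forall>s\<in>Gam. \<forall>t\<in>Gam. \<forall>c. br s (\<lambda>x. c *\<^sub>R t x) = (\<lambda>x. c *\<^sub>R br s t x)) \<and>
     (\<forall>s\<in>Gam. \<forall>t\<in>Gam. br s t = (\<lambda>x. - br t s x)) \<and>
     (\<forall>s\<in>Gam. \<forall>t\<in>Gam. \<forall>u\<in>Gam.
        (\<lambda>x. br s (br t u) x + br t (br u s) x + br u (br s t) x) = (\<lambda>x. 0)) \<and>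
     \<comment> \<open>Leibniz rule\<close>
     (\<forall>s\<in>Gam. \<forall>t\<in>Gam. \<forall>f\<in>C.
        br s (fmul f t) = (\<lambda>x. f x *\<^sub>R br s t x + rho s f x *\<^sub>R t x)) \<and>
     \<comment> \<open>the anchor preserves brackets (standard consequence, made explicit)\<close>
     (\<forall>s\<in>Gam. \<forall>t\<in>Gam. \<forall>f\<in>C.
        rho (br s t) f = (\<lambda>x. rho s (rho t f) x - rho t (rho s f) x))"

definition dE ::
  "(('m \<Rightarrow> 'e) \<Rightarrow> ('m \<Rightarrow> real) \<Rightarrow> ('m \<Rightarrow> real)) \<Rightarrow> (('m \<Rightarrow> 'e) \<Rightarrow> ('m \<Rightarrow> 'e) \<Rightarrow> ('m \<Rightarrow> 'e))
   \<Rightarrow> ('m \<Rightarrow> 'e \<Rightarrow> real) \<Rightarrow> ('m \<Rightarrow> 'e) \<Rightarrow> ('m \<Rightarrow> 'e) \<Rightarrow> ('m \<Rightarrow> real)" where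
  "dE rho br eta s1 s2 = (\<lambda>x. (1/2) * (rho s1 (\<lambda>y. eta y (s2 y)) x - rho s2 (\<lambda>y. eta y (s1 y)) x
                                        - eta x (br s1 s2 x)))"

definition fundamental_form ::
  "('m \<Rightarrow> 'e \<Rightarrow> 'e) \<Rightarrow> ('m \<Rightarrow> 'e \<Rightarrow> 'e \<Rightarrow> real) \<Rightarrow> ('m \<Rightarrow> 'e) \<Rightarrow> ('m \<Rightarrow> 'e) \<Rightarrow> ('m \<Rightarrow> real)" where
  "fundamental_form F g s1 s2 = (\<lambda>x. g x (s1 x) (F x (s2 x)))"

definition endo_sec :: "('m \<Rightarrow> 'e \<Rightarrow> 'e) \<Rightarrow> ('m \<Rightarrow> 'e) \<Rightarrow> ('m \<Rightarrow> 'e)" where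
  "endo_sec F s = (\<lambda>x. F x (s x))"

definition almost_contact_riemannian ::
  "('m \<Rightarrow> real) set \<Rightarrow> ('m \<Rightarrow> 'e::real_vector set) \<Rightarrow> ('m \<Rightarrow> 'e) set \<Rightarrow> nat
   \<Rightarrow> ('m \<Rightarrow> 'e \<Rightarrow> 'e) \<Rightarrow> ('m \<Rightarrow> 'e) \<Rightarrow> ('m \<Rightarrow> 'e \<Rightarrow> real) \<Rightarrow> ('m \<Rightarrow> 'e \<Rightarrow> 'e \<Rightarrow> real) \<Rightarrow> bool" where
  "almost_contact_riemannian C E Gam m F xi eta g \<longleftrightarrow>
     \<comment> \<open>rank 2m+1\<close>
     (\<forall>x. dim (E x) = 2 * m + 1) \<and>
     \<comment> \<open>F smooth bundle endomorphism\<close>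
     (\<forall>x. lin_on (E x) (F x) \<and> F x ` E x \<subseteq> E x) \<and>
     (\<forall>s\<in>Gam. endo_sec F s \<in> Gam) \<and>
     \<comment> \<open>xi smooth section, eta smooth 1-form\<close>
     xi \<in> Gam \<and>
     (\<forall>x. lin_on (E x) (eta x)) \<and>
     (\<forall>s\<in>Gam. (\<lambda>x. eta x (s x)) \<in> C) \<and>
     \<comment> \<open>g smooth bundle metric\<close>
     (\<forall>x. \<forall>u\<in>E x. lin_on (E x) (g x u)) \<and>
     (\<forall>x. \<forall>u\<in>E x. \<forall>v\<in>E x. g x u v = g x v u) \<and>
     (\<forall>x. \<forall>u\<in>E x. u \<noteq> 0 \<longrightarrow> g x u u > 0) \<and>
     (\<forall>s\<in>Gam. \<forall>t\<in>Gam. (\<lambda>x. g x (s x) (t x)) \<in> C) \<and>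
     \<comment> \<open>almost contact metric identities\<close>
     (\<forall>x. \<forall>v\<in>E x. F x (F x v) = - v + eta x v *\<^sub>R xi x) \<and>
     (\<forall>x. eta x (xi x) = 1) \<and>
     (\<forall>x. \<forall>u\<in>E x. \<forall>v\<in>E x. g x (F x u) (F x v) = g x u v - eta x u * eta x v)"

text \<open>(eta wedge (d_E eta)^m)(s_0,...,s_2m), up to a nonzero constant factor.\<close>
definition contact_volume ::
  "(('m \<Rightarrow> 'e) \<Rightarrow> ('m \<Rightarrow> real) \<Rightarrow> ('m \<Rightarrow> real)) \<Rightarrow> (('m \<Rightarrow> 'e) \<Rightarrow> ('m \<Rightarrow> 'e) \<Rightarrow> ('m \<Rightarrow> 'e))
   \<Rightarrow> ('m \<Rightarrow> 'e \<Rightarrow> real) \<Rightarrow> nat \<Rightarrow> (nat \<Rightarrow> ('m \<Rightarrow> 'e)) \<Rightarrow> ('m \<Rightarrow> real)" where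
  "contact_volume rho br eta m s = (\<lambda>x.
     \<Sum>p\<in>{p. p permutes {0..2*m}}. of_int (sign p) * eta x (s (p 0) x) *
        (\<Prod>i\<in>{1..m}. dE rho br eta (s (p (2*i - 1))) (s (p (2*i))) x))"

definition contact_riemannian_lie_algebroid where
  "contact_riemannian_lie_algebroid C E Gam rho br m F xi eta g \<longleftrightarrow>
     lie_algebroid C E Gam rho br \<and>
     almost_contact_riemannian C E Gam m F xi eta g \<and>
     \<comment> \<open>eta wedge (d_E eta)^m vanishes nowhere\<close>
     (\<forall>x. \<exists>s. (\<forall>i\<le>2*m. s i \<in> Gam) \<and> contact_volume rho br eta m s x \<noteq> 0) \<and>
     \<comment> \<open>d_E eta = Omega_E\<close>
     (\<forall>s1\<in>Gam. \<forall>s2\<in>Gam. dE rho br eta s1 s2 = fundamental_form F g s1 s2)"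

definition nijenhuis where
  "nijenhuis br F s1 s2 = (\<lambda>x.
     br (endo_sec F s1) (endo_sec F s2) x
     - F x (br (endo_sec F s1) s2 x)
     - F x (br s1 (endo_sec F s2) x)
     + F x (F x (br s1 s2 x)))"

definition normal_structure where
  "normal_structure Gam rho br F xi eta \<longleftrightarrow>
     (\<forall>s1\<in>Gam. \<forall>s2\<in>Gam.
        (\<lambda>x. nijenhuis br F s1 s2 x + (2 * dE rho br eta s1 s2 x) *\<^sub>R xi x) = (\<lambda>x. 0))"

definition sasakian_lie_algebroid where
  "sasakian_lie_algebroid C E Gam rho br m F xi eta g \<longleftrightarrow>
     contact_riemannian_lie_algebroid C E Gam rho br m F xi eta g \<and>
     normal_structure Gam rho br F xi eta"

definition killing_section where
  "killing_section Gam rho br g xi \<longleftrightarrow>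
     (\<forall>s1\<in>Gam. \<forall>s2\<in>Gam.
        (\<lambda>x. rho xi (\<lambda>y. g y (s1 y) (s2 y)) x - g x (br xi s1 x) (s2 x) - g x (s1 x) (br xi s2 x))
        = (\<lambda>x. 0))"

definition K_contact_lie_algebroid where
  "K_contact_lie_algebroid C E Gam rho br m F xi eta g \<longleftrightarrow>
     contact_riemannian_lie_algebroid C E Gam rho br m F xi eta g \<and>
     killing_section Gam rho br g xi"

end

theory Submission
  imports Defs
begin

text \<open>On a contact Riemannian Lie algebroid the metric is recovered from the contact form,
  \<open>g(s\<^sub>1, s\<^sub>2) = d\<^sub>E\<eta>(Fs\<^sub>1, s\<^sub>2) + \<eta>(s\<^sub>1) \<eta>(s\<^sub>2)\<close>, so \<open>\<xi>\<close> is Killing as soon as the Lie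
  derivative along \<open>\<xi>\<close> kills \<open>\<eta>\<close>, \<open>d\<^sub>E\<eta>\<close> and \<open>F\<close>. For \<open>\<eta>\<close> this is \<open>d\<^sub>E\<eta>(\<xi>, \<cdot>) = g(\<xi>, F\<cdot>) = \<eta>\<circ>F = 0\<close>;
  for \<open>d\<^sub>E\<eta>\<close> it then follows from the Jacobi identity and the fact that the anchor preserves
  brackets. Only the invariance of \<open>F\<close> uses normality: the Nijenhuis condition at \<open>(\<xi>, s)\<close> says
  that \<open>F\<close> kills \<open>[\<xi>, Fs] - F[\<xi>, s]\<close>, and so does \<open>\<eta>\<close>, hence this difference is zero.\<close>

lemma lin_on_neg: "lin_on V f \<Longrightarrow> u \<in> V \<Longrightarrow> f (- u) = - f u"
  unfolding lin_on_def by (metis scaleR_minus1_left)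

lemma lin_on_zero: "lin_on V f \<Longrightarrow> subspace V \<Longrightarrow> f 0 = 0"
  unfolding lin_on_def by (metis scaleR_zero_left subspace_0)

lemma lin_on_diff:
  "lin_on V f \<Longrightarrow> subspace V \<Longrightarrow> u \<in> V \<Longrightarrow> v \<in> V \<Longrightarrow> f (u - v) = f u - f v"
  unfolding lin_on_def by (metis diff_conv_add_uminus scaleR_minus1_left subspace_neg)

locale almost_contact_metric_space =
  fixes V :: "'e::real_vector set" and F :: "'e \<Rightarrow> 'e" and \<xi> :: 'e
    and \<eta> :: "'e \<Rightarrow> real" and g :: "'e \<Rightarrow> 'e \<Rightarrow> real"
  assumes subspace: "subspace V"
    and F_linear: "lin_on V F" and F_into: "v \<in> V \<Longrightarrow> F v \<in> V"
    and xi_in: "\<xi> \<in> V" and eta_linear: "lin_on V \<eta>"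
    and g_linear: "u \<in> V \<Longrightarrow> lin_on V (g u)"
    and g_sym: "u \<in> V \<Longrightarrow> v \<in> V \<Longrightarrow> g u v = g v u"
    and F_F: "v \<in> V \<Longrightarrow> F (F v) = - v + \<eta> v *\<^sub>R \<xi>"
    and eta_xi: "\<eta> \<xi> = 1"
    and g_F_F: "u \<in> V \<Longrightarrow> v \<in> V \<Longrightarrow> g (F u) (F v) = g u v - \<eta> u * \<eta> v"
begin

lemma F_scaleR: "v \<in> V \<Longrightarrow> F (c *\<^sub>R v) = c *\<^sub>R F v"
  using F_linear unfolding lin_on_def by blast

lemma F_zero: "F 0 = 0"
  using lin_on_zero[OF F_linear subspace] .

lemma eta_zero: "\<eta> 0 = 0"
  using lin_on_zero[OF eta_linear subspace] .

lemma xi_nonzero: "\<xi> \<noteq> 0"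
  using eta_xi eta_zero by auto

lemma F_xi: "F \<xi> = 0"
proof -
  define c where "c = \<eta> (F \<xi>)"
  have FF_xi: "F (F \<xi>) = 0"
    using F_F[OF xi_in] eta_xi by simp
  have "F (F (F \<xi>)) = - F \<xi> + c *\<^sub>R \<xi>"
    unfolding c_def using F_F[OF F_into[OF xi_in]] .
  then have F_xi_eq: "F \<xi> = c *\<^sub>R \<xi>"
    using FF_xi F_zero by simp
  have "F (F \<xi>) = (c * c) *\<^sub>R \<xi>"
    unfolding F_xi_eq F_scaleR[OF xi_in] by simp
  then have "c = 0"
    using FF_xi xi_nonzero by simp
  then show ?thesis
    using F_xi_eq by simp
qed

lemma eta_F: "v \<in> V \<Longrightarrow> \<eta> (F v) = 0"
proof -
  assume v: "v \<in> V"
  have "F (F (F v)) = F (- v) + F (\<eta> v *\<^sub>R \<xi>)"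
    unfolding F_F[OF v] using F_linear subspace_neg[OF subspace v]
      subspace_scale[OF subspace xi_in] unfolding lin_on_def by blast
  also have "\<dots> = - F v"
    using lin_on_neg[OF F_linear v] F_scaleR[OF xi_in] F_xi by simp
  finally have "\<eta> (F v) *\<^sub>R \<xi> = 0"
    using F_F[OF F_into[OF v]] by simp
  then show ?thesis
    using xi_nonzero by simp
qed

lemma eta_eq_g_xi: "v \<in> V \<Longrightarrow> \<eta> v = g \<xi> v"
proof -
  assume v: "v \<in> V"
  have "g 0 (F v) = g (F v) 0"
    using g_sym[OF subspace_0[OF subspace] F_into[OF v]] .
  also have "\<dots> = 0"
    using lin_on_zero[OF g_linear[OF F_into[OF v]] subspace] .
  finally show ?thesis
    using g_F_F[OF xi_in v] F_xi eta_xi by simp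
qed

lemma eq_zero_if_F_eq_zero: "v \<in> V \<Longrightarrow> F v = 0 \<Longrightarrow> \<eta> v = 0 \<Longrightarrow> v = 0"
  using F_F F_zero by fastforce

end

abbreviation (input) pairing :: "('m \<Rightarrow> 'e \<Rightarrow> real) \<Rightarrow> ('m \<Rightarrow> 'e) \<Rightarrow> 'm \<Rightarrow> real" where
  "pairing \<eta> s \<equiv> (\<lambda>x. \<eta> x (s x))"

locale Lie_algebroid =
  fixes C :: "('m \<Rightarrow> real) set" and E :: "'m \<Rightarrow> 'e::real_vector set"
    and Gam :: "('m \<Rightarrow> 'e) set"
    and rho :: "('m \<Rightarrow> 'e) \<Rightarrow> ('m \<Rightarrow> real) \<Rightarrow> ('m \<Rightarrow> real)"
    and br :: "('m \<Rightarrow> 'e) \<Rightarrow> ('m \<Rightarrow> 'e) \<Rightarrow> ('m \<Rightarrow> 'e)"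
  assumes lie_algebroid: "lie_algebroid C E Gam rho br"
begin

lemma const_in_C[rule_format]: "\<forall>c. (\<lambda>x. c) \<in> C"
  using lie_algebroid unfolding lie_algebroid_def by (elim conjE) assumption

lemma C_closed[rule_format]: "\<forall>f\<in>C. \<forall>h\<in>C. (\<lambda>x. f x + h x) \<in> C \<and> (\<lambda>x. f x * h x) \<in> C"
  using lie_algebroid unfolding lie_algebroid_def by (elim conjE) assumption

lemma subspace_fibre[rule_format]: "\<forall>x. subspace (E x)"
  using lie_algebroid unfolding lie_algebroid_def by (elim conjE) assumption

lemma section_in_fibre[rule_format]: "\<forall>s\<in>Gam. \<forall>x. s x \<in> E x"
  using lie_algebroid unfolding lie_algebroid_def by (elim conjE) assumption

lemma zero_section: "(\<lambda>x. 0) \<in> Gam"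
  using lie_algebroid unfolding lie_algebroid_def by (elim conjE) assumption

lemma anchor_in_C[rule_format]: "\<forall>s\<in>Gam. \<forall>f\<in>C. rho s f \<in> C"
  using lie_algebroid unfolding lie_algebroid_def by (elim conjE) assumption

lemma anchor_add[rule_format]: "\<forall>s\<in>Gam. \<forall>f\<in>C. \<forall>h\<in>C.
      rho s (\<lambda>x. f x + h x) = (\<lambda>x. rho s f x + rho s h x)"
  using lie_algebroid unfolding lie_algebroid_def by (elim conjE) assumption

lemma anchor_scale[rule_format]: "\<forall>s\<in>Gam. \<forall>f\<in>C. \<forall>c. rho s (\<lambda>x. c * f x) = (\<lambda>x. c * rho s f x)"
  using lie_algebroid unfolding lie_algebroid_def by (elim conjE) assumption

lemma anchor_mult[rule_format]: "\<forall>s\<in>Gam. \<forall>f\<in>C. \<forall>h\<in>C.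
      rho s (\<lambda>x. f x * h x) = (\<lambda>x. f x * rho s h x + h x * rho s f x)"
  using lie_algebroid unfolding lie_algebroid_def by (elim conjE) assumption

lemma bracket_in_Gam[rule_format]: "\<forall>s\<in>Gam. \<forall>t\<in>Gam. br s t \<in> Gam"
  using lie_algebroid unfolding lie_algebroid_def by (elim conjE) assumption

lemma bracket_scale[rule_format]: "\<forall>s\<in>Gam. \<forall>t\<in>Gam. \<forall>c. br s (\<lambda>x. c *\<^sub>R t x) = (\<lambda>x. c *\<^sub>R br s t x)"
  using lie_algebroid unfolding lie_algebroid_def by (elim conjE) assumption

lemma bracket_antisym[rule_format]: "\<forall>s\<in>Gam. \<forall>t\<in>Gam. br s t = (\<lambda>x. - br t s x)"
  using lie_algebroid unfolding lie_algebroid_def by (elim conjE) assumption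

lemma jacobi[rule_format]: "\<forall>s\<in>Gam. \<forall>t\<in>Gam. \<forall>u\<in>Gam.
      (\<lambda>x. br s (br t u) x + br t (br u s) x + br u (br s t) x) = (\<lambda>x. 0)"
  using lie_algebroid unfolding lie_algebroid_def by (elim conjE) assumption

lemma anchor_bracket[rule_format]: "\<forall>s\<in>Gam. \<forall>t\<in>Gam. \<forall>f\<in>C.
      rho (br s t) f = (\<lambda>x. rho s (rho t f) x - rho t (rho s f) x)"
  using lie_algebroid unfolding lie_algebroid_def by (elim conjE) assumption

lemma add_in_C: "f \<in> C \<Longrightarrow> h \<in> C \<Longrightarrow> (\<lambda>x. f x + h x) \<in> C"
  using C_closed by blast

lemma mult_in_C: "f \<in> C \<Longrightarrow> h \<in> C \<Longrightarrow> (\<lambda>x. f x * h x) \<in> C"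
  using C_closed by blast

lemma bracket_jacobi:
  "s \<in> Gam \<Longrightarrow> t \<in> Gam \<Longrightarrow> u \<in> Gam \<Longrightarrow> br s (br t u) x + br t (br u s) x + br u (br s t) x = 0"
  using jacobi by (metis (mono_tags))

lemma diff_in_C: "f \<in> C \<Longrightarrow> h \<in> C \<Longrightarrow> (\<lambda>x. f x - h x) \<in> C"
proof -
  assume "f \<in> C" "h \<in> C"
  then have "(\<lambda>x. f x + -1 * h x) \<in> C"
    using add_in_C mult_in_C[OF const_in_C] by blast
  then show ?thesis
    by simp
qed

lemma anchor_diff:
  assumes "s \<in> Gam" "f \<in> C" "h \<in> C"
  shows "rho s (\<lambda>x. f x - h x) = (\<lambda>x. rho s f x - rho s h x)"
  using anchor_add[OF assms(1,2) mult_in_C[OF const_in_C assms(3)], of "-1"]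
    anchor_scale[OF assms(1,3), of "-1"] by simp

lemma anchor_const: "s \<in> Gam \<Longrightarrow> rho s (\<lambda>x. c) = (\<lambda>x. 0)"
  using anchor_mult[OF _ const_in_C const_in_C, of s 1 1] anchor_scale[OF _ const_in_C, of s c 1]
  by (simp add: fun_eq_iff)

lemma bracket_zero_right: "s \<in> Gam \<Longrightarrow> br s (\<lambda>x. 0) = (\<lambda>x. 0)"
  using bracket_scale[OF _ zero_section, of s 0] by simp

lemma bracket_zero_left: "s \<in> Gam \<Longrightarrow> br (\<lambda>x. 0) s = (\<lambda>x. 0)"
  using bracket_antisym[OF zero_section, of s] bracket_zero_right by simp

lemma bracket_leibniz:
  assumes "\<xi> \<in> Gam" "s \<in> Gam" "t \<in> Gam"
  shows "br \<xi> (br s t) x = br (br \<xi> s) t x + br s (br \<xi> t) x"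
proof -
  have "br s (br t \<xi>) x = - br s (br \<xi> t) x"
    using bracket_antisym[OF assms(3,1)] bracket_scale[OF assms(2) bracket_in_Gam[OF assms(1,3)], of "-1"]
    by simp
  moreover have "br t (br \<xi> s) x = - br (br \<xi> s) t x"
    using bracket_antisym[OF assms(3) bracket_in_Gam[OF assms(1,2)]] by simp
  ultimately show ?thesis
    using bracket_jacobi[OF assms, of x] by (simp add: algebra_simps)
qed

lemma anchor_half_diff:
  assumes "s \<in> Gam" "f \<in> C" "h \<in> C" "k \<in> C"
  shows "rho s (\<lambda>x. (1/2) * (f x - h x - k x)) = (\<lambda>x. (1/2) * (rho s f x - rho s h x - rho s k x))"
proof -
  have "rho s (\<lambda>x. f x - h x - k x) = (\<lambda>x. rho s f x - rho s h x - rho s k x)"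
    using anchor_diff[OF assms(1) diff_in_C[OF assms(2,3)] assms(4)] anchor_diff[OF assms(1-3)] by simp
  then show ?thesis
    using anchor_scale[OF assms(1) diff_in_C[OF diff_in_C[OF assms(2,3)] assms(4)], of "1/2"] by simp
qed

text \<open>If the 1-form \<open>\<eta>\<close> is invariant along \<open>\<xi>\<close>, i.e. \<open>L\<^sub>\<xi>\<eta> = 0\<close>, then so is \<open>d\<^sub>E\<eta>\<close>.\<close>
lemma anchor_dE_of_invariant:
  assumes xi: "\<xi> \<in> Gam" and s1: "s1 \<in> Gam" and s2: "s2 \<in> Gam"
    and eta_linear: "\<And>x. lin_on (E x) (\<eta> x)"
    and eta_in_C: "\<And>s. s \<in> Gam \<Longrightarrow> pairing \<eta> s \<in> C"
    and invariant: "\<And>s x. s \<in> Gam \<Longrightarrow> \<eta> x (br \<xi> s x) = rho \<xi> (pairing \<eta> s) x"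
  shows "rho \<xi> (dE rho br \<eta> s1 s2) x = dE rho br \<eta> (br \<xi> s1) s2 x + dE rho br \<eta> s1 (br \<xi> s2) x"
proof -
  have s12: "br s1 s2 \<in> Gam" and xs1: "br \<xi> s1 \<in> Gam" and xs2: "br \<xi> s2 \<in> Gam"
    using bracket_in_Gam xi s1 s2 by auto
  have pairing_bracket: "pairing \<eta> (br \<xi> s) = rho \<xi> (pairing \<eta> s)" if "s \<in> Gam" for s
    using invariant[OF that] by auto
  have "\<eta> x (br \<xi> (br s1 s2) x) = \<eta> x (br (br \<xi> s1) s2 x) + \<eta> x (br s1 (br \<xi> s2) x)"
    using bracket_leibniz[OF xi s1 s2, of x] eta_linear[of x] section_in_fibre bracket_in_Gam
      xs1 xs2 s1 s2 unfolding lin_on_def by metis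
  then have jacobi_eta: "rho \<xi> (pairing \<eta> (br s1 s2)) x
      = \<eta> x (br (br \<xi> s1) s2 x) + \<eta> x (br s1 (br \<xi> s2) x)"
    using invariant[OF s12] by simp
  have "rho \<xi> (dE rho br \<eta> s1 s2) x = (1/2) * (rho \<xi> (rho s1 (pairing \<eta> s2)) x
      - rho \<xi> (rho s2 (pairing \<eta> s1)) x - rho \<xi> (pairing \<eta> (br s1 s2)) x)"
    unfolding dE_def using anchor_half_diff[OF xi anchor_in_C[OF s1 eta_in_C[OF s2]]
      anchor_in_C[OF s2 eta_in_C[OF s1]] eta_in_C[OF s12]] by simp
  then show ?thesis
    unfolding dE_def pairing_bracket[OF s1] pairing_bracket[OF s2] jacobi_eta
    using anchor_bracket[OF xi s1 eta_in_C[OF s2]] anchor_bracket[OF xi s2 eta_in_C[OF s1]]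
    by (simp add: algebra_simps)
qed

end

locale Contact_Riemannian_Lie_algebroid = Lie_algebroid C E Gam rho br
  for C :: "('m \<Rightarrow> real) set" and E :: "'m \<Rightarrow> 'e::real_vector set" and Gam rho br +
  fixes m :: nat and F :: "'m \<Rightarrow> 'e \<Rightarrow> 'e" and \<xi> :: "'m \<Rightarrow> 'e"
    and \<eta> :: "'m \<Rightarrow> 'e \<Rightarrow> real" and g :: "'m \<Rightarrow> 'e \<Rightarrow> 'e \<Rightarrow> real"
  assumes contact_riemannian: "contact_riemannian_lie_algebroid C E Gam rho br m F \<xi> \<eta> g"
begin

lemma almost_contact: "almost_contact_riemannian C E Gam m F \<xi> \<eta> g"
  using contact_riemannian unfolding contact_riemannian_lie_algebroid_def by (elim conjE)

lemma dE_eq_fundamental_form[rule_format]: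
  "\<forall>s1\<in>Gam. \<forall>s2\<in>Gam. dE rho br \<eta> s1 s2 = fundamental_form F g s1 s2"
  using contact_riemannian unfolding contact_riemannian_lie_algebroid_def by (elim conjE)

lemma F_section[rule_format]: "\<forall>s\<in>Gam. endo_sec F s \<in> Gam"
  using almost_contact unfolding almost_contact_riemannian_def by (elim conjE)

lemma xi_section: "\<xi> \<in> Gam"
  using almost_contact unfolding almost_contact_riemannian_def by (elim conjE)

lemma eta_in_C[rule_format]: "\<forall>s\<in>Gam. pairing \<eta> s \<in> C"
  using almost_contact unfolding almost_contact_riemannian_def by (elim conjE)

lemma metric_in_C[rule_format]: "\<forall>s\<in>Gam. \<forall>t\<in>Gam. (\<lambda>x. g x (s x) (t x)) \<in> C"
  using almost_contact unfolding almost_contact_riemannian_def by (elim conjE)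

lemma almost_contact_metric_fibre: "almost_contact_metric_space (E x) (F x) (\<xi> x) (\<eta> x) (g x)"
  using almost_contact subspace_fibre section_in_fibre[OF xi_section]
  unfolding almost_contact_riemannian_def almost_contact_metric_space_def
  by (elim conjE) (intro conjI allI impI; fastforce)

lemma eta_linear: "lin_on (E x) (\<eta> x)"
  using almost_contact_metric_space.eta_linear[OF almost_contact_metric_fibre] .

lemma F_xi: "F x (\<xi> x) = 0"
  using almost_contact_metric_space.F_xi[OF almost_contact_metric_fibre] .

lemma eta_F: "v \<in> E x \<Longrightarrow> \<eta> x (F x v) = 0"
  using almost_contact_metric_space.eta_F[OF almost_contact_metric_fibre] .

lemma eta_xi: "\<eta> x (\<xi> x) = 1"
  using almost_contact_metric_space.eta_xi[OF almost_contact_metric_fibre] .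

lemma dE_xi_left: "s \<in> Gam \<Longrightarrow> dE rho br \<eta> \<xi> s = (\<lambda>x. 0)"
  using dE_eq_fundamental_form[OF xi_section] eta_F section_in_fibre
    almost_contact_metric_space.eta_eq_g_xi[OF almost_contact_metric_fibre]
    almost_contact_metric_space.F_into[OF almost_contact_metric_fibre]
  unfolding fundamental_form_def by fastforce

lemma eta_bracket_xi: "s \<in> Gam \<Longrightarrow> \<eta> x (br \<xi> s x) = rho \<xi> (pairing \<eta> s) x"
  using fun_cong[OF dE_xi_left, of s x] anchor_const[of s 1] eta_xi unfolding dE_def by simp

lemma anchor_xi_dE:
  "s1 \<in> Gam \<Longrightarrow> s2 \<in> Gam \<Longrightarrow>
    rho \<xi> (dE rho br \<eta> s1 s2) x = dE rho br \<eta> (br \<xi> s1) s2 x + dE rho br \<eta> s1 (br \<xi> s2) x"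
  using anchor_dE_of_invariant[OF xi_section _ _ eta_linear eta_in_C eta_bracket_xi] .

lemma metric_eq_dE_F:
  "s1 \<in> Gam \<Longrightarrow> s2 \<in> Gam \<Longrightarrow>
    g x (s1 x) (s2 x) = dE rho br \<eta> (endo_sec F s1) s2 x + \<eta> x (s1 x) * \<eta> x (s2 x)"
  using dE_eq_fundamental_form[OF F_section] section_in_fibre
    almost_contact_metric_space.g_F_F[OF almost_contact_metric_fibre]
  unfolding fundamental_form_def endo_sec_def by simp

lemma killing_section_if_bracket_xi_commutes_F:
  assumes commute: "\<And>s. s \<in> Gam \<Longrightarrow> br \<xi> (endo_sec F s) = endo_sec F (br \<xi> s)"
  shows "killing_section Gam rho br g \<xi>"
  unfolding killing_section_def
proof (intro ballI ext)
  fix s1 s2 x assume s1: "s1 \<in> Gam" and s2: "s2 \<in> Gam"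
  have Fs1: "endo_sec F s1 \<in> Gam" and xs1: "br \<xi> s1 \<in> Gam" and xs2: "br \<xi> s2 \<in> Gam"
    using F_section bracket_in_Gam xi_section s1 s2 by auto
  have dE_in_C: "dE rho br \<eta> (endo_sec F s1) s2 \<in> C"
    using dE_eq_fundamental_form[OF Fs1 s2] metric_in_C[OF Fs1 F_section[OF s2]]
    unfolding fundamental_form_def endo_sec_def by simp
  have "(\<lambda>y. g y (s1 y) (s2 y))
      = (\<lambda>y. dE rho br \<eta> (endo_sec F s1) s2 y + \<eta> y (s1 y) * \<eta> y (s2 y))"
    using metric_eq_dE_F[OF s1 s2] by simp
  then have "rho \<xi> (\<lambda>y. g y (s1 y) (s2 y)) x = rho \<xi> (dE rho br \<eta> (endo_sec F s1) s2) x
      + (\<eta> x (s1 x) * rho \<xi> (pairing \<eta> s2) x + \<eta> x (s2 x) * rho \<xi> (pairing \<eta> s1) x)"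
    using anchor_add[OF xi_section dE_in_C mult_in_C[OF eta_in_C[OF s1] eta_in_C[OF s2]]]
      anchor_mult[OF xi_section eta_in_C[OF s1] eta_in_C[OF s2]] by simp
  also have "\<dots> = dE rho br \<eta> (endo_sec F (br \<xi> s1)) s2 x + \<eta> x (br \<xi> s1 x) * \<eta> x (s2 x)
      + (dE rho br \<eta> (endo_sec F s1) (br \<xi> s2) x + \<eta> x (s1 x) * \<eta> x (br \<xi> s2 x))"
    using anchor_xi_dE[OF Fs1 s2] commute[OF s1] eta_bracket_xi[OF s1] eta_bracket_xi[OF s2]
    by (simp add: algebra_simps)
  also have "\<dots> = g x (br \<xi> s1 x) (s2 x) + g x (s1 x) (br \<xi> s2 x)"
    using metric_eq_dE_F[OF xs1 s2] metric_eq_dE_F[OF s1 xs2] by simp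
  finally show "rho \<xi> (\<lambda>y. g y (s1 y) (s2 y)) x - g x (br \<xi> s1 x) (s2 x) - g x (s1 x) (br \<xi> s2 x) = 0"
    by simp
qed

end

locale Sasakian_Lie_algebroid = Contact_Riemannian_Lie_algebroid +
  assumes normal: "normal_structure Gam rho br F \<xi> \<eta>"
begin

lemma bracket_xi_endo_sec: "s \<in> Gam \<Longrightarrow> br \<xi> (endo_sec F s) = endo_sec F (br \<xi> s)"
proof
  fix x assume s: "s \<in> Gam"
  interpret fibre: almost_contact_metric_space "E x" "F x" "\<xi> x" "\<eta> x" "g x"
    by (rule almost_contact_metric_fibre)
  have Fs: "endo_sec F s \<in> Gam" and xs: "br \<xi> s \<in> Gam"
    using F_section bracket_in_Gam xi_section s by auto
  have a_in: "br \<xi> (endo_sec F s) x \<in> E x" and b_in: "F x (br \<xi> s x) \<in> E x"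
    using section_in_fibre bracket_in_Gam[OF xi_section Fs] fibre.F_into xs by auto
  define w where "w = br \<xi> (endo_sec F s) x - F x (br \<xi> s x)"
  have w_in: "w \<in> E x"
    unfolding w_def using a_in b_in subspace_diff[OF subspace_fibre] by blast
  have F_xi_section: "endo_sec F \<xi> = (\<lambda>x. 0)"
    unfolding endo_sec_def using F_xi by simp
  have "nijenhuis br F \<xi> s x + (2 * dE rho br \<eta> \<xi> s x) *\<^sub>R \<xi> x = 0"
    using normal s xi_section unfolding normal_structure_def by (metis (mono_tags))
  then have "F x (br \<xi> (endo_sec F s) x) = F x (F x (br \<xi> s x))"
    unfolding nijenhuis_def F_xi_section dE_xi_left[OF s]
    using bracket_zero_left[OF Fs] bracket_zero_left[OF s] fibre.F_zero by simp
  then have F_w: "F x w = 0"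
    unfolding w_def using lin_on_diff[OF fibre.F_linear subspace_fibre a_in b_in] by simp
  have "pairing \<eta> (endo_sec F s) = (\<lambda>y. 0)"
    unfolding endo_sec_def using eta_F section_in_fibre[OF s] by simp
  then have "\<eta> x (br \<xi> (endo_sec F s) x) = 0"
    using eta_bracket_xi[OF Fs] anchor_const[OF xi_section] by simp
  then have eta_w: "\<eta> x w = 0"
    unfolding w_def using lin_on_diff[OF eta_linear subspace_fibre a_in b_in]
      fibre.eta_F[OF section_in_fibre[OF xs]] by simp
  show "br \<xi> (endo_sec F s) x = endo_sec F (br \<xi> s) x"
    using fibre.eq_zero_if_F_eq_zero[OF w_in F_w eta_w] unfolding w_def endo_sec_def by simp
qed

lemma killing_section_xi: "killing_section Gam rho br g \<xi>"
  using killing_section_if_bracket_xi_commutes_F[OF bracket_xi_endo_sec] .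

end

theorem theorem4p2:
  fixes C :: "('m \<Rightarrow> real) set" and E :: "'m \<Rightarrow> 'e::real_vector set"
    and Gam :: "('m \<Rightarrow> 'e) set"
    and rho :: "('m \<Rightarrow> 'e) \<Rightarrow> ('m \<Rightarrow> real) \<Rightarrow> ('m \<Rightarrow> real)"
    and br :: "('m \<Rightarrow> 'e) \<Rightarrow> ('m \<Rightarrow> 'e) \<Rightarrow> ('m \<Rightarrow> 'e)"
    and m :: nat and F :: "'m \<Rightarrow> 'e \<Rightarrow> 'e" and xi :: "'m \<Rightarrow> 'e"
    and eta :: "'m \<Rightarrow> 'e \<Rightarrow> real" and g :: "'m \<Rightarrow> 'e \<Rightarrow> 'e \<Rightarrow> real"
  assumes "sasakian_lie_algebroid C E Gam rho br m F xi eta g"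
  shows "K_contact_lie_algebroid C E Gam rho br m F xi eta g"
proof -
  have contact: "contact_riemannian_lie_algebroid C E Gam rho br m F xi eta g"
    and normal: "normal_structure Gam rho br F xi eta"
    using assms unfolding sasakian_lie_algebroid_def by auto
  then interpret Sasakian_Lie_algebroid C E Gam rho br m F xi eta g
    by unfold_locales (auto simp: contact_riemannian_lie_algebroid_def)
  show ?thesis
    unfolding K_contact_lie_algebroid_def using contact killing_section_xi by blast
qed

end
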